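(* Let $f:[0,\infty)\to[0,\infty)$ be a differentiable convex function with $f(0)=0$, let $0<m<M$, and let $\sigma$ be a matrix mean. Then for all $A,B\in\mathbb{P}_n^+$ with spectra contained in $[m,M]$, $$f'(0)(A\sigma B)\le \frac{f(m)}{m}(A\sigma B)\le f(A)\sigma f(B)\le \frac{f(M)}{M}(A\sigma B)\le f'(M)(A\sigma B)$$ and $$f'(0)(A\sigma B)\le \frac{f(m)}{m}(A\sigma B)\le f(A\sigma B)\le \frac{f(M)}{M}(A\sigma B)\le f'(M)(A\sigma B).$$ If $f:[0,\infty)\to[0,\infty)$ is instead a differentiable concave function with $f(0)=0$, all these inequalities are reversed.
   Context: $\mathbb{P}_n$ (resp. $\mathbb{P}_n^+$) denotes the set of $n\times n$ complex positive semidefinite (resp. positive definite) matrices, $I$ is the identity matrix and $\le$ is the Löwner order. For a Hermitian matrix $A$ and a real function $f$ defined on its spectrum, $f(A)$ is defined by functional calculus. "Spectrum contained in $[m,M]$" means $mI\le A\le MI$. A matrix mean is a binary operation $\sigma:\mathbb{P}_n\times\mathbb{P}_n\to\mathbb{P}_n$ such that (i) $A\le C$ and $B\le D$ imply $A\sigma B\le C\sigma D$; (ii) $C^*(A\sigma B)C\le (C^*AC)\sigma(C^*BC)$ for all $C$; (iii) if $A_k\downarrow A$ and $B_k\downarrow B$ (decreasing sequences converging) then $A_k\sigma B_k\downarrow A\sigma B$; (iv) $I\sigma I=I$. *)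

theory Defs
  imports "HOL-Analysis.Convex" "Jordan_Normal_Form.Matrix"
begin

definition adj :: "complex mat \<Rightarrow> complex mat" where
  "adj A = transpose_mat (map_mat cnj A)"

definition hermitian :: "nat \<Rightarrow> complex mat \<Rightarrow> bool" where
  "hermitian n A \<longleftrightarrow> A \<in> carrier_mat n n \<and> adj A = A"

definition unitary :: "nat \<Rightarrow> complex mat \<Rightarrow> bool" where
  "unitary n U \<longleftrightarrow> U \<in> carrier_mat n n \<and> U * adj U = 1\<^sub>m n \<and> adj U * U = 1\<^sub>m n"

definition qform :: "complex mat \<Rightarrow> complex vec \<Rightarrow> complex" where
  "qform A x = scalar_prod (map_vec cnj x) (mult_mat_vec A x)"

definition psd :: "nat \<Rightarrow> complex mat \<Rightarrow> bool" where
  "psd n A \<longleftrightarrow> hermitian n A \<and>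
     (\<forall>x \<in> carrier_vec n. Im (qform A x) = 0 \<and> Re (qform A x) \<ge> 0)"

definition pd :: "nat \<Rightarrow> complex mat \<Rightarrow> bool" where
  "pd n A \<longleftrightarrow> hermitian n A \<and>
     (\<forall>x \<in> carrier_vec n. x \<noteq> 0\<^sub>v n \<longrightarrow> Im (qform A x) = 0 \<and> Re (qform A x) > 0)"

definition loewner_le :: "nat \<Rightarrow> complex mat \<Rightarrow> complex mat \<Rightarrow> bool" where
  "loewner_le n A B \<longleftrightarrow> hermitian n A \<and> hermitian n B \<and> psd n (B - A)"

definition scal_id :: "nat \<Rightarrow> real \<Rightarrow> complex mat" where
  "scal_id n c = complex_of_real c \<cdot>\<^sub>m 1\<^sub>m n"

text \<open>Spectrum contained in [m,M], i.e. mI \<le> A \<le> MI.\<close>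
definition spec_in :: "nat \<Rightarrow> real \<Rightarrow> real \<Rightarrow> complex mat \<Rightarrow> bool" where
  "spec_in n m M A \<longleftrightarrow> loewner_le n (scal_id n m) A \<and> loewner_le n A (scal_id n M)"

text \<open>Functional calculus for Hermitian matrices: if A = U diag(\<lambda>) U^* with U unitary and
  \<lambda> real, then f(A) = U diag(f(\<lambda>)) U^* (this is independent of the chosen decomposition).\<close>
definition mat_fun :: "nat \<Rightarrow> (real \<Rightarrow> real) \<Rightarrow> complex mat \<Rightarrow> complex mat" where
  "mat_fun n f A = (SOME B. \<exists>U lam. unitary n U \<and>
       A = U * mat_diag n (\<lambda>i. complex_of_real (lam i)) * adj U \<and>
       B = U * mat_diag n (\<lambda>i. complex_of_real (f (lam i))) * adj U)"

definition mat_lim :: "nat \<Rightarrow> (nat \<Rightarrow> complex mat) \<Rightarrow> complex mat \<Rightarrow> bool" where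
  "mat_lim n X L \<longleftrightarrow> (\<forall>i<n. \<forall>j<n. (\<lambda>k. X k $$ (i,j)) \<longlonglongrightarrow> L $$ (i,j))"

definition mat_decr_to :: "nat \<Rightarrow> (nat \<Rightarrow> complex mat) \<Rightarrow> complex mat \<Rightarrow> bool" where
  "mat_decr_to n X L \<longleftrightarrow> (\<forall>k. loewner_le n (X (Suc k)) (X k)) \<and> mat_lim n X L"

definition matrix_mean :: "nat \<Rightarrow> (complex mat \<Rightarrow> complex mat \<Rightarrow> complex mat) \<Rightarrow> bool" where
  "matrix_mean n sigma \<longleftrightarrow>
     (\<forall>A B. psd n A \<and> psd n B \<longrightarrow> psd n (sigma A B)) \<and>
     (\<forall>A B C D. psd n A \<and> psd n B \<and> psd n C \<and> psd n D \<and>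
        loewner_le n A C \<and> loewner_le n B D \<longrightarrow> loewner_le n (sigma A B) (sigma C D)) \<and>
     (\<forall>A B C. psd n A \<and> psd n B \<and> C \<in> carrier_mat n n \<longrightarrow>
        loewner_le n (adj C * sigma A B * C) (sigma (adj C * A * C) (adj C * B * C))) \<and>
     (\<forall>X Y A B. (\<forall>k. psd n (X k) \<and> psd n (Y k)) \<and> psd n A \<and> psd n B \<and>
        mat_decr_to n X A \<and> mat_decr_to n Y B \<longrightarrow>
        mat_decr_to n (\<lambda>k. sigma (X k) (Y k)) (sigma A B)) \<and>
     sigma (1\<^sub>m n) (1\<^sub>m n) = 1\<^sub>m n"

end

theory Submission
  imports Defs "Jordan_Normal_Form.Spectral_Radius"
begin

text \<open>For convex \<open>f\<close> with \<open>f 0 = 0\<close> the secant slope \<open>f x / x\<close> is nondecreasing, so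
  \<open>f m / m * x \<le> f x \<le> f M / M * x\<close> on \<open>[m, M]\<close>, while comparing difference quotients gives
  \<open>f' 0 \<le> f m / m\<close> and \<open>f M / M \<le> f' M\<close>. Diagonalising a Hermitian matrix with spectrum in
  \<open>[m, M]\<close> by a unitary turns these pointwise bounds into Loewner bounds for its functional
  calculus. For the mean, monotonicity gives \<open>\<sigma>(c A, c B) \<le> \<sigma>(f A, f B) \<le> \<sigma>(c' A, c' B)\<close>, and the
  transformer inequality with \<open>C = \<surd>c I\<close> makes \<open>\<sigma>\<close> positively homogeneous; together with
  \<open>\<sigma>(I, I) = I\<close> this also confines the spectrum of \<open>\<sigma>(A, B)\<close> to \<open>[m, M]\<close>.
  Concave \<open>f\<close> is handled through \<open>-f\<close>.\<close>

section \<open>Adjoints, quadratic forms and the Loewner order\<close>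

lemma adj_carrier [simp]: "A \<in> carrier_mat n m \<Longrightarrow> adj A \<in> carrier_mat m n"
  by (auto simp: adj_def)

lemma adj_dims [simp]: "dim_row (adj A) = dim_col A" "dim_col (adj A) = dim_row A"
  by (auto simp: adj_def)

lemma adj_index [simp]:
  "i < dim_col A \<Longrightarrow> j < dim_row A \<Longrightarrow> adj A $$ (i,j) = cnj (A $$ (j,i))"
  by (auto simp: adj_def)

lemma adj_adj [simp]: "adj (adj A) = A"
  by (intro eq_matI) auto

lemma adj_one [simp]: "adj (1\<^sub>m n) = 1\<^sub>m n"
  by (intro eq_matI) auto

lemma adj_zero [simp]: "adj (0\<^sub>m n m) = 0\<^sub>m m n"
  by (intro eq_matI) auto

lemma adj_mult:
  "A \<in> carrier_mat n k \<Longrightarrow> B \<in> carrier_mat k m \<Longrightarrow> adj (A * B) = adj B * adj A"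
  by (intro eq_matI) (auto simp: scalar_prod_def mult.commute)

lemma adj_add:
  "A \<in> carrier_mat n m \<Longrightarrow> B \<in> carrier_mat n m \<Longrightarrow> adj (A + B) = adj A + adj B"
  by (intro eq_matI) auto

lemma adj_minus:
  "A \<in> carrier_mat n m \<Longrightarrow> B \<in> carrier_mat n m \<Longrightarrow> adj (A - B) = adj A - adj B"
  by (intro eq_matI) auto

lemma adj_smult: "adj (c \<cdot>\<^sub>m A) = cnj c \<cdot>\<^sub>m adj A"
  by (intro eq_matI) auto

lemma adj_mat_diag_of_real:
  "adj (mat_diag n (\<lambda>i. complex_of_real (d i))) = mat_diag n (\<lambda>i. complex_of_real (d i))"
  by (intro eq_matI) (auto simp: mat_diag_def)

lemma adj_four_block_mat:
  assumes "A \<in> carrier_mat n1 m1" "B \<in> carrier_mat n1 m2" "C \<in> carrier_mat n2 m1" "D \<in> carrier_mat n2 m2"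
  shows "adj (four_block_mat A B C D) = four_block_mat (adj A) (adj C) (adj B) (adj D)"
  using assms by (intro eq_matI) auto

lemma scalar_prod_cnj_adj:
  assumes C: "C \<in> carrier_mat n n" and x: "x \<in> carrier_vec n" and w: "w \<in> carrier_vec n"
  shows "map_vec cnj x \<bullet> (adj C *\<^sub>v w) = map_vec cnj (C *\<^sub>v x) \<bullet> w"
proof -
  have "map_vec cnj x \<bullet> (adj C *\<^sub>v w) = (\<Sum>i<n. \<Sum>j<n. cnj (x$i) * (cnj (C$$(j,i)) * w$j))"
    using assms by (auto simp: scalar_prod_def sum_distrib_left atLeast0LessThan intro!: sum.cong)
  also have "\<dots> = (\<Sum>j<n. \<Sum>i<n. cnj (x$i) * (cnj (C$$(j,i)) * w$j))"
    by (rule sum.swap)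
  also have "\<dots> = map_vec cnj (C *\<^sub>v x) \<bullet> w"
    using assms by (auto simp: scalar_prod_def sum_distrib_right atLeast0LessThan cnj_sum
        intro!: sum.cong)
  finally show ?thesis .
qed

lemma qform_add:
  "A \<in> carrier_mat n n \<Longrightarrow> B \<in> carrier_mat n n \<Longrightarrow> x \<in> carrier_vec n \<Longrightarrow>
   qform (A + B) x = qform A x + qform B x"
  by (simp add: qform_def add_mult_distrib_mat_vec scalar_prod_add_distrib[of _ n])

lemma qform_smult:
  assumes "A \<in> carrier_mat n n" "x \<in> carrier_vec n"
  shows "qform (c \<cdot>\<^sub>m A) x = c * qform A x"
proof -
  have "(c \<cdot>\<^sub>m A) *\<^sub>v x = c \<cdot>\<^sub>v (A *\<^sub>v x)"
    using assms by (intro eq_vecI) (auto simp: scalar_prod_def sum_distrib_left mult.assoc)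
  then show ?thesis
    using assms by (simp add: qform_def scalar_prod_smult_right)
qed

lemma qform_congruence:
  assumes C: "C \<in> carrier_mat n n" and X: "X \<in> carrier_mat n n" and x: "x \<in> carrier_vec n"
  shows "qform (adj C * X * C) x = qform X (C *\<^sub>v x)"
proof -
  have "qform (adj C * X * C) x = map_vec cnj x \<bullet> (adj C *\<^sub>v (X *\<^sub>v (C *\<^sub>v x)))"
    unfolding qform_def using assms
    by (subst assoc_mult_mat_vec[of _ n n _ n]) (auto simp: assoc_mult_mat_vec[of _ n n _ n])
  also have "\<dots> = qform X (C *\<^sub>v x)"
    unfolding qform_def using assms by (intro scalar_prod_cnj_adj[of _ n]) auto
  finally show ?thesis .
qed

lemma qform_mat_diag_of_real:
  assumes x: "x \<in> carrier_vec n"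
  shows "qform (mat_diag n (\<lambda>i. complex_of_real (d i))) x
           = (\<Sum>i<n. complex_of_real (d i * (cmod (x $ i))\<^sup>2))"
proof -
  have "mat_diag n (\<lambda>i. complex_of_real (d i)) *\<^sub>v x = vec n (\<lambda>i. complex_of_real (d i) * x $ i)"
    using x by (intro eq_vecI) (auto simp: mat_diag_def scalar_prod_def sum.delta'
        if_distrib[of "\<lambda>y. y * _"] cong: if_cong)
  then have "qform (mat_diag n (\<lambda>i. complex_of_real (d i))) x
               = (\<Sum>i<n. cnj (x $ i) * (complex_of_real (d i) * x $ i))"
    using x by (simp add: qform_def scalar_prod_def atLeast0LessThan)
  also have "\<dots> = (\<Sum>i<n. complex_of_real (d i * (cmod (x $ i))\<^sup>2))"
    by (rule sum.cong) (simp_all add: complex_norm_square mult_ac flip: of_real_power)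
  finally show ?thesis .
qed

lemma hermitian_add: "hermitian n A \<Longrightarrow> hermitian n B \<Longrightarrow> hermitian n (A + B)"
  by (auto simp: hermitian_def adj_add)

lemma hermitian_smult_of_real: "hermitian n A \<Longrightarrow> hermitian n (complex_of_real c \<cdot>\<^sub>m A)"
  by (auto simp: hermitian_def adj_smult)

lemma hermitian_congruence:
  "hermitian n X \<Longrightarrow> C \<in> carrier_mat n n \<Longrightarrow> hermitian n (adj C * X * C)"
  unfolding hermitian_def by (auto simp: adj_mult[of _ n n _ n] assoc_mult_mat[of _ n n _ n _ n])

lemma psd_hermitian: "psd n A \<Longrightarrow> hermitian n A"
  by (simp add: psd_def)

lemma psd_carrier: "psd n A \<Longrightarrow> A \<in> carrier_mat n n"
  by (simp add: psd_def hermitian_def)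

lemma pd_imp_psd:
  assumes "pd n A"
  shows "psd n A"
proof -
  have "A \<in> carrier_mat n n"
    using assms by (simp add: pd_def hermitian_def)
  then have "qform A (0\<^sub>v n) = 0"
    by (simp add: qform_def scalar_prod_def)
  then have "Im (qform A x) = 0 \<and> 0 \<le> Re (qform A x)" if "x \<in> carrier_vec n" for x
    using assms that unfolding pd_def by (cases "x = 0\<^sub>v n") auto
  then show ?thesis
    using assms by (simp add: pd_def psd_def)
qed

lemma psd_zero: "psd n (0\<^sub>m n n)"
  unfolding psd_def hermitian_def qform_def by (auto simp: scalar_prod_def)

lemma psd_add: "psd n A \<Longrightarrow> psd n B \<Longrightarrow> psd n (A + B)"
  using psd_carrier[of n A] psd_carrier[of n B]
  by (auto simp: psd_def hermitian_add qform_add[of _ n])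

lemma psd_smult: "psd n A \<Longrightarrow> 0 \<le> c \<Longrightarrow> psd n (complex_of_real c \<cdot>\<^sub>m A)"
  using psd_carrier[of n A] by (auto simp: psd_def hermitian_smult_of_real qform_smult[of _ n])

lemma psd_congruence: "psd n X \<Longrightarrow> C \<in> carrier_mat n n \<Longrightarrow> psd n (adj C * X * C)"
  using psd_carrier[of n X] by (auto simp: psd_def hermitian_congruence qform_congruence[of _ n])

lemma psd_mat_diag_iff:
  "psd n (mat_diag n (\<lambda>i. complex_of_real (d i))) \<longleftrightarrow> (\<forall>i<n. 0 \<le> d i)"
proof
  assume psd: "psd n (mat_diag n (\<lambda>i. complex_of_real (d i)))"
  show "\<forall>i<n. 0 \<le> d i"
  proof (intro allI impI)
    fix i assume i: "i < n"
    have "(\<Sum>k<n. complex_of_real (d k * (cmod (unit_vec n i $ k))\<^sup>2))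
            = (\<Sum>k<n. if k = i then complex_of_real (d i) else 0)"
      by (rule sum.cong) (auto simp: unit_vec_def)
    then have "qform (mat_diag n (\<lambda>i. complex_of_real (d i))) (unit_vec n i) = complex_of_real (d i)"
      using i by (simp add: qform_mat_diag_of_real)
    moreover have "0 \<le> Re (qform (mat_diag n (\<lambda>i. complex_of_real (d i))) (unit_vec n i))"
      using psd unfolding psd_def by simp
    ultimately show "0 \<le> d i"
      by simp
  qed
qed (auto simp: psd_def hermitian_def adj_mat_diag_of_real qform_mat_diag_of_real Re_sum Im_sum
    intro!: sum_nonneg)

lemma loewner_le_trans: "loewner_le n A B \<Longrightarrow> loewner_le n B C \<Longrightarrow> loewner_le n A C"
proof -
  assume AB: "loewner_le n A B" and BC: "loewner_le n B C"
  then have "C - A = (C - B) + (B - A)"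
    by (auto simp: loewner_le_def hermitian_def)
  then show ?thesis
    using AB BC psd_add[of n "C - B" "B - A"] by (auto simp: loewner_le_def)
qed

lemma loewner_le_smult:
  assumes "loewner_le n A B" "0 \<le> c"
  shows "loewner_le n (complex_of_real c \<cdot>\<^sub>m A) (complex_of_real c \<cdot>\<^sub>m B)"
proof -
  have "complex_of_real c \<cdot>\<^sub>m B - complex_of_real c \<cdot>\<^sub>m A = complex_of_real c \<cdot>\<^sub>m (B - A)"
    using assms by (auto simp: algebra_simps loewner_le_def hermitian_def)
  then show ?thesis
    using assms psd_smult[of n "B - A" c] by (auto simp: loewner_le_def hermitian_smult_of_real)
qed

lemma loewner_le_smult_left:
  assumes "psd n X" "a \<le> b"
  shows "loewner_le n (complex_of_real a \<cdot>\<^sub>m X) (complex_of_real b \<cdot>\<^sub>m X)"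
proof -
  have "complex_of_real b \<cdot>\<^sub>m X - complex_of_real a \<cdot>\<^sub>m X = complex_of_real (b - a) \<cdot>\<^sub>m X"
    using psd_carrier[OF assms(1)] by (auto simp: algebra_simps)
  then show ?thesis
    using assms psd_smult[of n X "b - a"] psd_hermitian
    by (auto simp: loewner_le_def hermitian_smult_of_real)
qed

section \<open>Unitary diagonalisation of Hermitian matrices\<close>

lemma unitary_carrier: "unitary n U \<Longrightarrow> U \<in> carrier_mat n n"
  by (simp add: unitary_def)

lemma unitaryI:
  assumes "U \<in> carrier_mat n n" "U * adj U = 1\<^sub>m n"
  shows "unitary n U"
  using assms mat_mult_left_right_inverse[OF assms(1) adj_carrier[OF assms(1)] assms(2)]
  by (simp add: unitary_def)

lemma unitary_adj: "unitary n U \<Longrightarrow> unitary n (adj U)"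
  by (auto simp: unitary_def)

lemma unitary_mult:
  assumes P: "unitary n P" and Q: "unitary n Q"
  shows "unitary n (P * Q)"
proof (rule unitaryI)
  have Pc: "P \<in> carrier_mat n n" and Qc: "Q \<in> carrier_mat n n"
    using P Q by (auto simp: unitary_def)
  have aP: "adj P \<in> carrier_mat n n" and aQ: "adj Q \<in> carrier_mat n n"
    using Pc Qc by auto
  have "P * Q * adj (P * Q) = P * (Q * (adj Q * adj P))"
    using assoc_mult_mat[OF Pc Qc mult_carrier_mat[OF aQ aP]] by (simp add: adj_mult[OF Pc Qc])
  also have "Q * (adj Q * adj P) = (Q * adj Q) * adj P"
    using assoc_mult_mat[OF Qc aQ aP] by simp
  finally show "P * Q * adj (P * Q) = 1\<^sub>m n"
    using P Q aP by (simp add: unitary_def left_mult_one_mat[OF aP])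
qed (use P Q in \<open>auto simp: unitary_def\<close>)

lemma unitary_conj_cancel:
  assumes U: "unitary n U" and A: "A \<in> carrier_mat n n"
  shows "adj U * (U * A * adj U) * U = A"
proof -
  have Uc: "U \<in> carrier_mat n n" and aU: "adj U \<in> carrier_mat n n"
    using U by (auto simp: unitary_def)
  have UA: "U * A \<in> carrier_mat n n" "U * A * adj U \<in> carrier_mat n n"
    using Uc A aU by auto
  have "adj U * (U * A * adj U) * U = adj U * (U * A * (adj U * U))"
    using assoc_mult_mat[OF aU UA(2) Uc] assoc_mult_mat[OF UA(1) aU Uc] by simp
  also have "\<dots> = (adj U * U) * A"
    using U UA(1) assoc_mult_mat[OF aU Uc A] by (simp add: unitary_def right_mult_one_mat[OF UA(1)])
  finally show ?thesis
    using U A by (simp add: unitary_def)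
qed

lemma unitary_conj_mat_diag_index:
  "U \<in> carrier_mat n n \<Longrightarrow> i < n \<Longrightarrow> j < n \<Longrightarrow>
   (U * mat_diag n d * adj U) $$ (i,j) = (\<Sum>k<n. U $$ (i,k) * d k * cnj (U $$ (j,k)))"
  by (auto simp: mat_diag_mult_right[of U n n] scalar_prod_def atLeast0LessThan intro!: sum.cong)

lemma unitary_conj_mat_diag_minus:
  assumes U: "U \<in> carrier_mat n n"
  shows "U * mat_diag n a * adj U - U * mat_diag n b * adj U = U * mat_diag n (\<lambda>i. a i - b i) * adj U"
  using U by (intro eq_matI)
    (auto simp del: index_mult_mat(1)
      simp: unitary_conj_mat_diag_index sum_subtractf[symmetric] algebra_simps)

lemma unitary_conj_mat_diag_smult:
  assumes U: "U \<in> carrier_mat n n"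
  shows "c \<cdot>\<^sub>m (U * mat_diag n a * adj U) = U * mat_diag n (\<lambda>i. c * a i) * adj U"
  using U by (intro eq_matI)
    (auto simp del: index_mult_mat(1)
      simp: unitary_conj_mat_diag_index sum_distrib_left algebra_simps)

lemma unitary_conj_mat_diag_const:
  assumes U: "unitary n U"
  shows "U * mat_diag n (\<lambda>i. c) * adj U = c \<cdot>\<^sub>m 1\<^sub>m n"
proof -
  have "U * mat_diag n (\<lambda>i. c) * adj U = c \<cdot>\<^sub>m (U * 1\<^sub>m n * adj U)"
    using unitary_conj_mat_diag_smult[OF unitary_carrier[OF U], of c "\<lambda>i. 1"] by simp
  then show ?thesis
    using U right_mult_one_mat[OF unitary_carrier[OF U]] by (simp add: unitary_def)
qed

lemma hermitian_unitary_conj_mat_diag: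
  "U \<in> carrier_mat n n \<Longrightarrow> hermitian n (U * mat_diag n (\<lambda>i. complex_of_real (d i)) * adj U)"
  using hermitian_congruence[of n "mat_diag n (\<lambda>i. complex_of_real (d i))" "adj U"]
  by (simp add: hermitian_def adj_mat_diag_of_real)

lemma psd_unitary_conj_mat_diag_iff:
  assumes U: "unitary n U"
  shows "psd n (U * mat_diag n (\<lambda>i. complex_of_real (d i)) * adj U) \<longleftrightarrow> (\<forall>i<n. 0 \<le> d i)"
proof -
  let ?D = "mat_diag n (\<lambda>i. complex_of_real (d i))"
  have "adj U * (U * ?D * adj U) * U = ?D"
    using unitary_conj_cancel[OF U, of ?D] by simp
  then have "psd n (U * ?D * adj U) \<Longrightarrow> psd n ?D"
    using psd_congruence[of n "U * ?D * adj U" U] unitary_carrier[OF U] by simp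
  moreover have "psd n ?D \<Longrightarrow> psd n (U * ?D * adj U)"
    using psd_congruence[of n ?D "adj U"] unitary_carrier[OF U] by simp
  ultimately show ?thesis
    using psd_mat_diag_iff by blast
qed

lemma loewner_le_unitary_conj_mat_diag_iff:
  assumes U: "unitary n U"
  shows "loewner_le n (U * mat_diag n (\<lambda>i. complex_of_real (a i)) * adj U)
                      (U * mat_diag n (\<lambda>i. complex_of_real (b i)) * adj U) \<longleftrightarrow> (\<forall>i<n. a i \<le> b i)"
  using psd_unitary_conj_mat_diag_iff[OF U, of "\<lambda>i. b i - a i"] unitary_carrier[OF U]
  by (simp add: loewner_le_def hermitian_unitary_conj_mat_diag unitary_conj_mat_diag_minus)

lemma spec_in_eigenvalues:
  assumes U: "unitary n U" and X: "X = U * mat_diag n (\<lambda>i. complex_of_real (lam i)) * adj U"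
    and "spec_in n a b X" and "i < n"
  shows "a \<le> lam i \<and> lam i \<le> b"
proof -
  have "scal_id n c = U * mat_diag n (\<lambda>i. complex_of_real c) * adj U" for c
    using unitary_conj_mat_diag_const[OF U] by (simp add: scal_id_def)
  then show ?thesis
    using assms loewner_le_unitary_conj_mat_diag_iff[OF U] by (simp add: spec_in_def)
qed

lemma exists_unit_multiple:
  assumes v: "v \<in> carrier_vec n" "v \<noteq> 0\<^sub>v n" and n: "0 < n"
  shows "\<exists>a r. (\<Sum>i<n. (a * v $ i) * cnj (a * v $ i)) = 1 \<and> a * v $ 0 = complex_of_real r \<and> r \<le> 0"
proof -
  obtain j where j: "j < n" "v $ j \<noteq> 0"
    using v by (metis eq_vecI index_zero_vec carrier_vecD)
  define s where "s = (\<Sum>i<n. (cmod (v $ i))\<^sup>2)"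
  have "(cmod (v $ j))\<^sup>2 \<le> s"
    unfolding s_def by (rule member_le_sum) (use j in auto)
  then have s: "0 < s"
    using j by (smt (verit) zero_less_norm_iff zero_less_power)
  define \<phi> where "\<phi> = (if v $ 0 = 0 then 1 else - cnj (v $ 0) / complex_of_real (cmod (v $ 0)))"
  have \<phi>: "cmod \<phi> = 1"
    by (simp add: \<phi>_def norm_divide)
  define a where "a = \<phi> / complex_of_real (sqrt s)"
  have "(\<Sum>i<n. (a * v $ i) * cnj (a * v $ i)) = complex_of_real ((cmod a)\<^sup>2 * s)"
    by (simp add: s_def sum_distrib_left complex_norm_square mult_ac flip: of_real_power)
  also have "(cmod a)\<^sup>2 * s = 1"
    using s \<phi> by (simp add: a_def norm_divide power_divide)
  finally have unit: "(\<Sum>i<n. (a * v $ i) * cnj (a * v $ i)) = 1"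
    by simp
  define r where "r = (if v $ 0 = 0 then 0 else - cmod (v $ 0) / sqrt s)"
  have "a * v $ 0 = complex_of_real r"
  proof (cases "v $ 0 = 0")
    case False
    have "a * v $ 0 = - (cnj (v $ 0) * v $ 0) / (complex_of_real (cmod (v $ 0)) * complex_of_real (sqrt s))"
      using False by (simp add: a_def \<phi>_def)
    also have "cnj (v $ 0) * v $ 0 = complex_of_real ((cmod (v $ 0))\<^sup>2)"
      by (simp add: complex_norm_square mult.commute flip: of_real_power)
    finally show ?thesis
      using False s by (simp add: r_def power2_eq_square)
  qed (simp add: r_def)
  moreover have "r \<le> 0"
    using s by (simp add: r_def)
  ultimately show ?thesis
    using unit by blast
qed

lemma unit_eigenvector_exists:
  fixes A :: "complex mat"
  assumes A: "A \<in> carrier_mat n n" and n: "0 < n"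
  shows "\<exists>e u r. u \<in> carrier_vec n \<and> A *\<^sub>v u = e \<cdot>\<^sub>v u \<and> (\<Sum>i<n. u $ i * cnj (u $ i)) = 1
           \<and> u $ 0 = complex_of_real r \<and> r \<le> 0"
proof -
  obtain e where "e \<in> spectrum A"
    using spectrum_non_empty[OF A n] by blast
  then obtain v where "eigenvector A v e"
    by (auto simp: spectrum_def eigenvalue_def)
  then have v: "v \<in> carrier_vec n" "v \<noteq> 0\<^sub>v n" and Av: "A *\<^sub>v v = e \<cdot>\<^sub>v v"
    using A by (auto simp: eigenvector_def)
  obtain a r where a: "(\<Sum>i<n. (a * v $ i) * cnj (a * v $ i)) = 1" "a * v $ 0 = complex_of_real r" "r \<le> 0"
    using exists_unit_multiple[OF v n] by blast
  have "A *\<^sub>v (a \<cdot>\<^sub>v v) = e \<cdot>\<^sub>v (a \<cdot>\<^sub>v v)"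
    using A v Av by (simp add: mult_mat_vec[OF A v(1)]) (auto simp: mult.commute mult.left_commute)
  then show ?thesis
    using a v n by (intro exI[of _ e] exI[of _ "a \<cdot>\<^sub>v v"] exI[of _ r]) auto
qed

definition reflection_mat :: "nat \<Rightarrow> complex \<Rightarrow> complex vec \<Rightarrow> complex mat" where
  "reflection_mat n c w = 1\<^sub>m n - c \<cdot>\<^sub>m mat n n (\<lambda>(i,j). w $ i * cnj (w $ j))"

lemma reflection_mat_unitary:
  assumes c_real: "cnj c = c" and c: "c * (\<Sum>i<n. w $ i * cnj (w $ i)) = 2"
  shows "unitary n (reflection_mat n c w)"
proof -
  define S where "S = (\<Sum>i<n. w $ i * cnj (w $ i))"
  define W where "W = mat n n (\<lambda>(i,j). w $ i * cnj (w $ j))"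
  define H where "H = reflection_mat n c w"
  have W: "W \<in> carrier_mat n n"
    by (simp add: W_def)
  then have H: "H \<in> carrier_mat n n"
    unfolding H_def reflection_mat_def W_def[symmetric]
    by (intro minus_carrier_mat smult_carrier_mat one_carrier_mat)
  have WW: "W * W = S \<cdot>\<^sub>m W"
    by (rule eq_matI) (auto simp: W_def S_def scalar_prod_def sum_distrib_left
        sum_distrib_right atLeast0LessThan mult.commute mult.left_commute intro!: sum.cong)
  have "adj W = W"
    by (rule eq_matI) (auto simp: W_def)
  then have "adj H = H"
    using W c_real by (simp add: H_def reflection_mat_def adj_minus[of _ n n] adj_smult W_def)
  moreover have "H * H = 1\<^sub>m n"
  proof -
    have "H * H = H - c \<cdot>\<^sub>m (W * H)"
      using W H by (simp add: H_def reflection_mat_def W_def[symmetric] minus_mult_distrib_mat[of _ n n]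
          mult_smult_assoc_mat[of _ n n])
    also have "W * H = W * 1\<^sub>m n - W * (c \<cdot>\<^sub>m W)"
      unfolding H_def reflection_mat_def W_def[symmetric]
      by (rule mult_minus_distrib_mat[OF W one_carrier_mat smult_carrier_mat[OF W]])
    also have "\<dots> = W - c \<cdot>\<^sub>m (S \<cdot>\<^sub>m W)"
      using W by (simp add: mult_smult_distrib[OF W W] WW)
    also have "H - c \<cdot>\<^sub>m (W - c \<cdot>\<^sub>m (S \<cdot>\<^sub>m W)) = 1\<^sub>m n"
      using W c by (intro eq_matI)
        (auto simp: H_def reflection_mat_def W_def[symmetric] S_def algebra_simps)
    finally show ?thesis .
  qed
  ultimately have "H * adj H = 1\<^sub>m n"
    using W by simp
  then show ?thesis
    using H unitaryI by (simp add: H_def)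
qed

lemma unitary_with_first_column:
  assumes u: "u \<in> carrier_vec n" and n: "0 < n" and unit: "(\<Sum>i<n. u $ i * cnj (u $ i)) = 1"
    and u0: "u $ 0 = complex_of_real r" and r: "r \<le> 0"
  shows "\<exists>H. unitary n H \<and> col H 0 = u"
proof -
  define w where "w = unit_vec n 0 - u"
  have w: "i < n \<Longrightarrow> w $ i = (if i = 0 then 1 else 0) - u $ i" for i
    using u by (simp add: w_def)
  obtain k where k: "n = Suc k"
    using n by (cases n) auto
  have split: "(\<Sum>i<n. f i) = f 0 + (\<Sum>i<k. f (Suc i))" for f :: "nat \<Rightarrow> complex"
    unfolding k by (rule sum.lessThan_Suc_shift)
  \<comment> \<open>the reflection in the hyperplane orthogonal to \<open>e\<^sub>0 - u\<close> swaps \<open>e\<^sub>0\<close> and \<open>u\<close>;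
    \<open>r \<le> 0\<close> keeps \<open>e\<^sub>0 - u\<close> away from zero\<close>
  define c where "c = complex_of_real (1 / (1 - r))"
  have "u $ 0 * cnj (u $ 0) + (\<Sum>i<k. u $ Suc i * cnj (u $ Suc i)) = 1"
    using unit by (simp only: split)
  moreover have "(\<Sum>i<k. w $ Suc i * cnj (w $ Suc i)) = (\<Sum>i<k. u $ Suc i * cnj (u $ Suc i))"
    by (rule sum.cong) (auto simp: w k)
  ultimately have tail: "(\<Sum>i<k. w $ Suc i * cnj (w $ Suc i)) = 1 - u $ 0 * cnj (u $ 0)"
    by (simp add: eq_diff_eq add.commute)
  have w0: "w $ 0 = 1 - u $ 0"
    using w[of 0] n by simp
  have "(\<Sum>i<n. w $ i * cnj (w $ i)) = complex_of_real (2 - 2 * r)"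
    unfolding split tail w0 u0 by (simp add: algebra_simps)
  moreover have "1 / (1 - r) * (2 - 2 * r) = 2"
    using r by (simp add: field_simps)
  ultimately have "c * (\<Sum>i<n. w $ i * cnj (w $ i)) = 2"
    unfolding c_def by (metis of_real_mult of_real_numeral)
  then have "unitary n (reflection_mat n c w)"
    by (intro reflection_mat_unitary) (simp_all add: c_def)
  moreover have "col (reflection_mat n c w) 0 = u"
  proof (rule eq_vecI)
    fix i assume "i < dim_vec u"
    then have i: "i < n" using u by simp
    have "c * cnj (w $ 0) = 1"
      using r unfolding w0 u0 by (simp add: c_def field_simps flip: of_real_mult)
    have "col (reflection_mat n c w) 0 $ i = (if i = 0 then 1 else 0) - w $ i * (c * cnj (w $ 0))"
      using i n by (simp add: reflection_mat_def mult_ac)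
    then show "col (reflection_mat n c w) 0 $ i = u $ i"
      unfolding \<open>c * cnj (w $ 0) = 1\<close> using i w[of i] by simp
  qed (use u in \<open>simp add: reflection_mat_def\<close>)
  ultimately show ?thesis
    by blast
qed


lemma hermitian_first_column_block:
  assumes A: "hermitian (Suc k) A" and col: "col A 0 = e \<cdot>\<^sub>v unit_vec (Suc k) 0"
  shows "\<exists>r B. hermitian k B \<and>
           A = four_block_mat (mat 1 1 (\<lambda>_. complex_of_real r)) (0\<^sub>m 1 k) (0\<^sub>m k 1) B"
proof -
  have Ac: "A \<in> carrier_mat (Suc k) (Suc k)" and adjA: "adj A = A"
    using A by (auto simp: hermitian_def)
  have entry: "A $$ (a,b) = cnj (A $$ (b,a))" if "a < Suc k" "b < Suc k" for a b
    using adj_index[of a A b] that Ac adjA by simp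
  have first_col: "A $$ (i,0) = (if i = 0 then e else 0)" if "i < Suc k" for i
    using arg_cong[OF col, of "\<lambda>v. v $ i"] that Ac by simp
  have first_row: "A $$ (0,j) = (if j = 0 then cnj e else 0)" if "j < Suc k" for j
    using entry[of 0 j] first_col[of j] that by simp
  have "e = cnj e"
    using first_col[of 0] first_row[of 0] by simp
  then have e: "e = complex_of_real (Re e)"
    by (simp add: complex_eq_iff)
  define B where "B = mat k k (\<lambda>(i,j). A $$ (Suc i, Suc j))"
  have "adj B = B"
  proof (rule eq_matI)
    fix i j assume "i < dim_row B" "j < dim_col B"
    then show "adj B $$ (i,j) = B $$ (i,j)"
      using entry[of "Suc i" "Suc j"] by (simp add: B_def)
  qed (simp_all add: B_def)
  then have "hermitian k B"
    by (simp add: hermitian_def B_def)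
  moreover have "A = four_block_mat (mat 1 1 (\<lambda>_. complex_of_real (Re e))) (0\<^sub>m 1 k) (0\<^sub>m k 1) B"
  proof (rule eq_matI)
    fix i j
    assume "i < dim_row (four_block_mat (mat 1 1 (\<lambda>_. complex_of_real (Re e))) (0\<^sub>m 1 k) (0\<^sub>m k 1) B)"
      and "j < dim_col (four_block_mat (mat 1 1 (\<lambda>_. complex_of_real (Re e))) (0\<^sub>m 1 k) (0\<^sub>m k 1) B)"
    then have ij: "i < Suc k" "j < Suc k"
      by (simp_all add: B_def)
    show "A $$ (i,j) = four_block_mat (mat 1 1 (\<lambda>_. complex_of_real (Re e))) (0\<^sub>m 1 k) (0\<^sub>m k 1) B $$ (i,j)"
      using ij first_col first_row e by (cases i; cases j) (auto simp: B_def)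
  qed (use Ac in \<open>auto simp: B_def\<close>)
  ultimately show ?thesis
    by blast
qed

lemma unitary_deflation:
  assumes A: "hermitian (Suc k) A"
  shows "\<exists>H r B. unitary (Suc k) H \<and> hermitian k B \<and>
           adj H * A * H = four_block_mat (mat 1 1 (\<lambda>_. complex_of_real r)) (0\<^sub>m 1 k) (0\<^sub>m k 1) B"
proof -
  have Ac: "A \<in> carrier_mat (Suc k) (Suc k)"
    using A by (simp add: hermitian_def)
  obtain e u r where u: "u \<in> carrier_vec (Suc k)" and Au: "A *\<^sub>v u = e \<cdot>\<^sub>v u"
    and "(\<Sum>i<Suc k. u $ i * cnj (u $ i)) = 1" "u $ 0 = complex_of_real r" "r \<le> 0"
    using unit_eigenvector_exists[OF Ac] by blast
  then obtain H where H: "unitary (Suc k) H" and colH: "col H 0 = u"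
    using unitary_with_first_column by blast
  have Hc: "H \<in> carrier_mat (Suc k) (Suc k)" and aH: "adj H \<in> carrier_mat (Suc k) (Suc k)"
    using H by (auto simp: unitary_def)
  have "adj H *\<^sub>v u = unit_vec (Suc k) 0"
    using col_mult2[OF aH Hc, of 0] H colH by (simp add: unitary_def)
  moreover have "col (adj H * A * H) 0 = adj H *\<^sub>v (A *\<^sub>v u)"
    using col_mult2[OF mult_carrier_mat[OF aH Ac] Hc, of 0] colH
      assoc_mult_mat_vec[OF aH Ac u] by simp
  ultimately have "col (adj H * A * H) 0 = e \<cdot>\<^sub>v unit_vec (Suc k) 0"
    using Au mult_mat_vec[OF aH u] by simp
  moreover have "hermitian (Suc k) (adj H * A * H)"
    by (rule hermitian_congruence[OF A Hc])
  ultimately show ?thesis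
    using H hermitian_first_column_block by blast
qed

definition diag_block_one :: "nat \<Rightarrow> complex mat \<Rightarrow> complex mat" where
  "diag_block_one k U = four_block_mat (1\<^sub>m 1) (0\<^sub>m 1 k) (0\<^sub>m k 1) U"

lemma mult_four_block_diag_mat:
  assumes A1: "A1 \<in> carrier_mat n1 n1" and D1: "D1 \<in> carrier_mat n2 n2"
    and A2: "A2 \<in> carrier_mat n1 n1" and D2: "D2 \<in> carrier_mat n2 n2"
  shows "four_block_mat A1 (0\<^sub>m n1 n2) (0\<^sub>m n2 n1) D1 * four_block_mat A2 (0\<^sub>m n1 n2) (0\<^sub>m n2 n1) D2
           = four_block_mat (A1 * A2) (0\<^sub>m n1 n2) (0\<^sub>m n2 n1) (D1 * D2)"
  using mult_four_block_mat[OF A1 zero_carrier_mat zero_carrier_mat D1 A2 zero_carrier_mat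
      zero_carrier_mat D2] assms by simp

lemma adj_diag_block_one: "U \<in> carrier_mat k k \<Longrightarrow> adj (diag_block_one k U) = diag_block_one k (adj U)"
  by (simp add: diag_block_one_def adj_four_block_mat[of _ 1 1 _ k _ k])

lemma conj_diag_block_one:
  assumes U: "U \<in> carrier_mat k k" and X: "X \<in> carrier_mat k k"
  shows "diag_block_one k U * four_block_mat (mat 1 1 (\<lambda>_. x)) (0\<^sub>m 1 k) (0\<^sub>m k 1) X
           * adj (diag_block_one k U)
         = four_block_mat (mat 1 1 (\<lambda>_. x)) (0\<^sub>m 1 k) (0\<^sub>m k 1) (U * X * adj U)"
proof -
  have "mat 1 1 (\<lambda>_. x) \<in> carrier_mat 1 1"
    by simp
  then show ?thesis
    unfolding adj_diag_block_one[OF U] using U X by (simp add: diag_block_one_def mult_four_block_diag_mat)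
qed

lemma unitary_diag_block_one:
  assumes U: "unitary k U"
  shows "unitary (Suc k) (diag_block_one k U)"
proof (rule unitaryI)
  have Uc: "U \<in> carrier_mat k k"
    using U by (simp add: unitary_def)
  show "diag_block_one k U * adj (diag_block_one k U) = 1\<^sub>m (Suc k)"
    unfolding adj_diag_block_one[OF Uc] using U Uc
    by (simp add: diag_block_one_def mult_four_block_diag_mat unitary_def)
  have "diag_block_one k U \<in> carrier_mat (1 + k) (1 + k)"
    unfolding diag_block_one_def using Uc by (intro four_block_carrier_mat) auto
  then show "diag_block_one k U \<in> carrier_mat (Suc k) (Suc k)"
    by simp
qed

lemma mat_diag_Suc:
  "mat_diag (Suc k) d = four_block_mat (mat 1 1 (\<lambda>_. d 0)) (0\<^sub>m 1 k) (0\<^sub>m k 1) (mat_diag k (\<lambda>i. d (Suc i)))"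
  by (rule eq_matI) (auto simp: mat_diag_def)

lemma assoc_mult_mat_conj:
  assumes "P \<in> carrier_mat n n" "Q \<in> carrier_mat n n" "R \<in> carrier_mat n n" "S \<in> carrier_mat n n"
    "T \<in> carrier_mat n n"
  shows "P * (Q * R * S) * T = (P * Q) * R * (S * T)"
proof -
  have "P * (Q * R * S) * T = P * ((Q * R) * (S * T))"
    using assms by (simp add: assoc_mult_mat[of _ n n _ n _ n])
  also have "\<dots> = (P * (Q * R)) * (S * T)"
    using assms by (simp add: assoc_mult_mat[of _ n n _ n _ n])
  also have "\<dots> = (P * Q) * R * (S * T)"
    using assms by (simp add: assoc_mult_mat[of _ n n _ n _ n])
  finally show ?thesis .
qed

theorem hermitian_unitary_diagonalization:
  "hermitian n A \<Longrightarrow> \<exists>U lam. unitary n U \<and> A = U * mat_diag n (\<lambda>i. complex_of_real (lam i)) * adj U"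
proof (induction n arbitrary: A)
  case 0
  then have "A = 1\<^sub>m 0 * mat_diag 0 (\<lambda>i. complex_of_real 0) * adj (1\<^sub>m 0)"
    by (intro eq_matI) (auto simp: hermitian_def)
  moreover have "unitary 0 (1\<^sub>m 0)"
    by (simp add: unitary_def)
  ultimately show ?case
    by (intro exI[of _ "1\<^sub>m 0"] exI[of _ "\<lambda>_. 0 :: real"]) simp
next
  case (Suc k)
  obtain H r B where H: "unitary (Suc k) H" and B: "hermitian k B"
    and block: "adj H * A * H = four_block_mat (mat 1 1 (\<lambda>_. complex_of_real r)) (0\<^sub>m 1 k) (0\<^sub>m k 1) B"
    using unitary_deflation[OF Suc.prems] by blast
  obtain V lam where V: "unitary k V" and BV: "B = V * mat_diag k (\<lambda>i. complex_of_real (lam i)) * adj V"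
    using Suc.IH[OF B] by blast
  define E where "E = diag_block_one k V"
  define D where "D = mat_diag (Suc k) (\<lambda>i. complex_of_real (case_nat r lam i))"
  have E: "unitary (Suc k) E"
    unfolding E_def by (rule unitary_diag_block_one[OF V])
  have "adj H * A * H = E * D * adj E"
    using conj_diag_block_one[OF unitary_carrier[OF V] mat_diag_dim] block BV
    by (simp add: E_def D_def mat_diag_Suc)
  then have "A = H * (E * D * adj E) * adj H"
    using unitary_conj_cancel[OF unitary_adj[OF H], of A] Suc.prems by (simp add: hermitian_def)
  also have "\<dots> = (H * E) * D * (adj E * adj H)"
    using unitary_carrier[OF H] unitary_carrier[OF E]
    by (intro assoc_mult_mat_conj) (auto simp: D_def)
  also have "adj E * adj H = adj (H * E)"
    using unitary_carrier[OF H] unitary_carrier[OF E] by (simp add: adj_mult)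
  finally show ?case
    using unitary_mult[OF H E] unfolding D_def by blast
qed

section \<open>Functional calculus and pointwise bounds\<close>

text \<open>\<open>mat_fun\<close> picks its decomposition with \<open>SOME\<close>. Every bound below compares
  \<open>mat_fun n f X\<close> with \<open>c \<cdot> X\<close> through that same decomposition.\<close>

lemma mat_fun_unitary_diag:
  assumes X: "hermitian n X" and spec: "spec_in n a b X"
  obtains U lam where "unitary n U" "\<forall>i<n. a \<le> lam i \<and> lam i \<le> b"
    "X = U * mat_diag n (\<lambda>i. complex_of_real (lam i)) * adj U"
    "mat_fun n f X = U * mat_diag n (\<lambda>i. complex_of_real (f (lam i))) * adj U"
proof -
  have "\<exists>B U lam. unitary n U \<and> X = U * mat_diag n (\<lambda>i. complex_of_real (lam i)) * adj U \<and>
          B = U * mat_diag n (\<lambda>i. complex_of_real (f (lam i))) * adj U"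
    using hermitian_unitary_diagonalization[OF X] by blast
  from someI_ex[OF this] obtain U lam where U: "unitary n U" and XU: "X = U * mat_diag n (\<lambda>i. complex_of_real (lam i)) * adj U"
    and "mat_fun n f X = U * mat_diag n (\<lambda>i. complex_of_real (f (lam i))) * adj U"
    unfolding mat_fun_def by blast
  moreover have "\<forall>i<n. a \<le> lam i \<and> lam i \<le> b"
    using spec_in_eigenvalues[OF U XU spec] by blast
  ultimately show ?thesis
    using that by blast
qed

lemma smult_le_mat_fun:
  assumes "hermitian n X" "spec_in n a b X" and le: "\<And>x. a \<le> x \<Longrightarrow> x \<le> b \<Longrightarrow> c * x \<le> f x"
  shows "loewner_le n (complex_of_real c \<cdot>\<^sub>m X) (mat_fun n f X)"
proof -
  obtain U lam where U: "unitary n U" and lam: "\<forall>i<n. a \<le> lam i \<and> lam i \<le> b"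
    and X: "X = U * mat_diag n (\<lambda>i. complex_of_real (lam i)) * adj U"
    and fX: "mat_fun n f X = U * mat_diag n (\<lambda>i. complex_of_real (f (lam i))) * adj U"
    using mat_fun_unitary_diag[OF assms(1,2)] by blast
  have cX: "complex_of_real c \<cdot>\<^sub>m X = U * mat_diag n (\<lambda>i. complex_of_real (c * lam i)) * adj U"
    unfolding X unitary_conj_mat_diag_smult[OF unitary_carrier[OF U]] by simp
  show ?thesis
    unfolding fX cX loewner_le_unitary_conj_mat_diag_iff[OF U] using lam le by simp
qed

lemma mat_fun_le_smult:
  assumes "hermitian n X" "spec_in n a b X" and le: "\<And>x. a \<le> x \<Longrightarrow> x \<le> b \<Longrightarrow> f x \<le> c * x"
  shows "loewner_le n (mat_fun n f X) (complex_of_real c \<cdot>\<^sub>m X)"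
proof -
  obtain U lam where U: "unitary n U" and lam: "\<forall>i<n. a \<le> lam i \<and> lam i \<le> b"
    and X: "X = U * mat_diag n (\<lambda>i. complex_of_real (lam i)) * adj U"
    and fX: "mat_fun n f X = U * mat_diag n (\<lambda>i. complex_of_real (f (lam i))) * adj U"
    using mat_fun_unitary_diag[OF assms(1,2)] by blast
  have cX: "complex_of_real c \<cdot>\<^sub>m X = U * mat_diag n (\<lambda>i. complex_of_real (c * lam i)) * adj U"
    unfolding X unitary_conj_mat_diag_smult[OF unitary_carrier[OF U]] by simp
  show ?thesis
    unfolding fX cX loewner_le_unitary_conj_mat_diag_iff[OF U] using lam le by simp
qed

lemma psd_mat_fun:
  assumes "hermitian n X" "spec_in n a b X" and nonneg: "\<And>x. a \<le> x \<Longrightarrow> x \<le> b \<Longrightarrow> 0 \<le> f x"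
  shows "psd n (mat_fun n f X)"
proof -
  obtain U lam where U: "unitary n U" and lam: "\<forall>i<n. a \<le> lam i \<and> lam i \<le> b"
    and fX: "mat_fun n f X = U * mat_diag n (\<lambda>i. complex_of_real (f (lam i))) * adj U"
    using mat_fun_unitary_diag[OF assms(1,2)] by blast
  then show ?thesis
    using nonneg psd_unitary_conj_mat_diag_iff[OF U] by simp
qed


section \<open>Matrix means\<close>

lemma adj_scalar_conj:
  assumes X: "X \<in> carrier_mat n n"
  shows "adj (complex_of_real s \<cdot>\<^sub>m 1\<^sub>m n) * X * (complex_of_real s \<cdot>\<^sub>m 1\<^sub>m n)
           = complex_of_real (s * s) \<cdot>\<^sub>m X"
proof -
  have "(complex_of_real s \<cdot>\<^sub>m 1\<^sub>m n) * X = complex_of_real s \<cdot>\<^sub>m X"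
    using mult_smult_assoc_mat[OF one_carrier_mat X] X by simp
  moreover have "(complex_of_real s \<cdot>\<^sub>m X) * (complex_of_real s \<cdot>\<^sub>m 1\<^sub>m n)
                   = complex_of_real s \<cdot>\<^sub>m (complex_of_real s \<cdot>\<^sub>m X)"
    using mult_smult_assoc_mat[OF X smult_carrier_mat[OF one_carrier_mat]]
      mult_smult_distrib[OF X one_carrier_mat] X by simp
  moreover have "complex_of_real s \<cdot>\<^sub>m (complex_of_real s \<cdot>\<^sub>m X) = complex_of_real (s * s) \<cdot>\<^sub>m X"
    by (intro eq_matI) auto
  ultimately show ?thesis
    by (simp add: adj_smult)
qed

lemma psd_one: "psd n (1\<^sub>m n)"
  using psd_mat_diag_iff[of n "\<lambda>_. 1"] by simp

lemma psd_scal_id: "0 \<le> c \<Longrightarrow> psd n (scal_id n c)"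
  unfolding scal_id_def by (rule psd_smult[OF psd_one])

context
  fixes n :: nat and sigma :: "complex mat \<Rightarrow> complex mat \<Rightarrow> complex mat"
  assumes mean: "matrix_mean n sigma"
begin

lemma mean_psd: "psd n A \<Longrightarrow> psd n B \<Longrightarrow> psd n (sigma A B)"
  using mean by (simp add: matrix_mean_def)

lemma mean_mono:
  "psd n A \<Longrightarrow> psd n B \<Longrightarrow> psd n C \<Longrightarrow> psd n D \<Longrightarrow> loewner_le n A C \<Longrightarrow> loewner_le n B D
   \<Longrightarrow> loewner_le n (sigma A B) (sigma C D)"
  using mean unfolding matrix_mean_def by blast

lemma mean_congruence:
  "psd n A \<Longrightarrow> psd n B \<Longrightarrow> C \<in> carrier_mat n n \<Longrightarrow>
   loewner_le n (adj C * sigma A B * C) (sigma (adj C * A * C) (adj C * B * C))"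
  using mean unfolding matrix_mean_def by blast

lemma mean_one: "sigma (1\<^sub>m n) (1\<^sub>m n) = 1\<^sub>m n"
  using mean unfolding matrix_mean_def by blast

lemma smult_mean_le_mean_smult_square:
  "psd n A \<Longrightarrow> psd n B \<Longrightarrow> loewner_le n (complex_of_real (s * s) \<cdot>\<^sub>m sigma A B)
     (sigma (complex_of_real (s * s) \<cdot>\<^sub>m A) (complex_of_real (s * s) \<cdot>\<^sub>m B))"
  using mean_congruence[of A B "complex_of_real s \<cdot>\<^sub>m 1\<^sub>m n"] mean_psd[of A B]
  by (simp add: adj_scalar_conj psd_carrier)

lemma smult_mean_le_mean_smult:
  assumes A: "psd n A" and B: "psd n B" and c: "0 \<le> c"
  shows "loewner_le n (complex_of_real c \<cdot>\<^sub>m sigma A B)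
           (sigma (complex_of_real c \<cdot>\<^sub>m A) (complex_of_real c \<cdot>\<^sub>m B))"
  using smult_mean_le_mean_smult_square[OF A B, of "sqrt c"] c by simp

lemma mean_smult_le_smult_mean:
  assumes A: "psd n A" and B: "psd n B" and c: "0 \<le> c"
  shows "loewner_le n (sigma (complex_of_real c \<cdot>\<^sub>m A) (complex_of_real c \<cdot>\<^sub>m B))
           (complex_of_real c \<cdot>\<^sub>m sigma A B)"
proof (cases "c = 0")
  case True
  define Z where "Z = sigma (0\<^sub>m n n) (0\<^sub>m n n)"
  have Z: "psd n Z"
    unfolding Z_def by (intro mean_psd psd_zero)
  \<comment> \<open>homogeneity with factor 2 forces \<open>Z \<le> 0\<close>\<close>
  have "loewner_le n (complex_of_real 2 \<cdot>\<^sub>m Z) Z"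
    using smult_mean_le_mean_smult[OF psd_zero psd_zero, of 2] unfolding Z_def
    by (simp add: smult_carrier_mat)
  moreover have "Z - complex_of_real 2 \<cdot>\<^sub>m Z = 0\<^sub>m n n - Z"
    using psd_carrier[OF Z] by (intro eq_matI) auto
  ultimately have "loewner_le n Z (0\<^sub>m n n)"
    using Z psd_zero by (simp add: loewner_le_def psd_def)
  moreover have "complex_of_real c \<cdot>\<^sub>m X = 0\<^sub>m n n" if "X \<in> carrier_mat n n" for X
    using True that by (intro eq_matI) auto
  ultimately show ?thesis
    using A B mean_psd[OF A B] by (simp add: Z_def psd_carrier)
next
  case False
  define s where "s = 1 / sqrt c"
  have ssc: "s * s * c = 1"
    using c False by (simp add: s_def)
  have cA: "psd n (complex_of_real c \<cdot>\<^sub>m A)" and cB: "psd n (complex_of_real c \<cdot>\<^sub>m B)"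
    using psd_smult A B c by auto
  have cancel: "complex_of_real a \<cdot>\<^sub>m (complex_of_real b \<cdot>\<^sub>m X) = X"
    if "X \<in> carrier_mat n n" "a * b = 1" for a b X
    using that by (intro eq_matI) (auto simp flip: of_real_mult)
  have "loewner_le n (complex_of_real (s * s) \<cdot>\<^sub>m sigma (complex_of_real c \<cdot>\<^sub>m A) (complex_of_real c \<cdot>\<^sub>m B))
          (sigma A B)"
    using smult_mean_le_mean_smult_square[OF cA cB, of s]
    unfolding cancel[OF psd_carrier[OF A] ssc] cancel[OF psd_carrier[OF B] ssc] .
  moreover have "c * (s * s) = 1"
    using ssc by (simp add: mult.commute)
  ultimately show ?thesis
    using loewner_le_smult[of n _ _ c] c cancel[OF psd_carrier[OF mean_psd[OF cA cB]]] by metis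
qed

lemma spec_in_mean:
  assumes m: "0 \<le> m" and M: "0 \<le> M"
    and A: "psd n A" "spec_in n m M A" and B: "psd n B" "spec_in n m M B"
  shows "spec_in n m M (sigma A B)"
proof -
  have "loewner_le n (scal_id n m) (sigma (scal_id n m) (scal_id n m))"
    using smult_mean_le_mean_smult[OF psd_one psd_one m] mean_one by (simp add: scal_id_def)
  moreover have "loewner_le n (sigma (scal_id n m) (scal_id n m)) (sigma A B)"
    using A B psd_scal_id[OF m] mean_mono by (simp add: spec_in_def)
  moreover have "loewner_le n (sigma A B) (sigma (scal_id n M) (scal_id n M))"
    using A B psd_scal_id[OF M] mean_mono by (simp add: spec_in_def)
  moreover have "loewner_le n (sigma (scal_id n M) (scal_id n M)) (scal_id n M)"
    using mean_smult_le_smult_mean[OF psd_one psd_one M] mean_one by (simp add: scal_id_def)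
  ultimately show ?thesis
    unfolding spec_in_def by (blast intro: loewner_le_trans)
qed

lemma mat_fun_mean_between:
  assumes m: "0 \<le> m" and M: "0 \<le> M"
    and A: "psd n A" "spec_in n m M A" and B: "psd n B" "spec_in n m M B"
    and ab: "0 \<le> a" "0 \<le> b" and between: "\<forall>x\<in>{m..M}. a * x \<le> f x \<and> f x \<le> b * x"
  shows "loewner_le n (complex_of_real a \<cdot>\<^sub>m sigma A B) (sigma (mat_fun n f A) (mat_fun n f B))
      \<and> loewner_le n (sigma (mat_fun n f A) (mat_fun n f B)) (complex_of_real b \<cdot>\<^sub>m sigma A B)
      \<and> loewner_le n (complex_of_real a \<cdot>\<^sub>m sigma A B) (mat_fun n f (sigma A B))
      \<and> loewner_le n (mat_fun n f (sigma A B)) (complex_of_real b \<cdot>\<^sub>m sigma A B)"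
proof -
  have lower: "\<And>x. m \<le> x \<Longrightarrow> x \<le> M \<Longrightarrow> a * x \<le> f x"
    and upper: "\<And>x. m \<le> x \<Longrightarrow> x \<le> M \<Longrightarrow> f x \<le> b * x"
    using between by auto
  have nonneg: "0 \<le> f x" if "m \<le> x" "x \<le> M" for x
    using lower[OF that] ab(1) m that by (meson mult_nonneg_nonneg order_trans)
  have h: "hermitian n A" "hermitian n B" "hermitian n (sigma A B)"
    using A B mean_psd psd_hermitian by auto
  have fAB: "psd n (mat_fun n f A)" "psd n (mat_fun n f B)"
    using h A B nonneg by (auto intro: psd_mat_fun)
  have "loewner_le n (sigma (complex_of_real a \<cdot>\<^sub>m A) (complex_of_real a \<cdot>\<^sub>m B))
          (sigma (mat_fun n f A) (mat_fun n f B))"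
    using A B ab h fAB lower by (intro mean_mono) (auto intro: psd_smult smult_le_mat_fun)
  moreover have "loewner_le n (sigma (mat_fun n f A) (mat_fun n f B))
          (sigma (complex_of_real b \<cdot>\<^sub>m A) (complex_of_real b \<cdot>\<^sub>m B))"
    using A B ab h fAB upper by (intro mean_mono) (auto intro: psd_smult mat_fun_le_smult)
  moreover have "spec_in n m M (sigma A B)"
    using spec_in_mean[OF m M A B] .
  ultimately show ?thesis
    using smult_mean_le_mean_smult[OF A(1) B(1) ab(1)] mean_smult_le_smult_mean[OF A(1) B(1) ab(2)]
      smult_le_mat_fun[OF h(3) _ lower] mat_fun_le_smult[OF h(3) _ upper]
    by (blast intro: loewner_le_trans)
qed

end


section \<open>Secant slopes of convex functions vanishing at the origin\<close>

lemma convex_on_le_secant_origin: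
  fixes g :: "real \<Rightarrow> real"
  assumes cv: "convex_on {0..} g" and g0: "g 0 = 0" and y: "0 \<le> y" "y \<le> x"
  shows "g y \<le> y / x * g x"
proof (cases "x = 0")
  case False
  define t where "t = y / x"
  have t: "0 \<le> t" "t \<le> 1"
    using y False by (auto simp: t_def field_simps)
  have "g ((1 - t) *\<^sub>R 0 + t *\<^sub>R x) \<le> (1 - t) * g 0 + t * g x"
    by (rule convex_onD[OF cv t]) (use y in auto)
  moreover have "(1 - t) *\<^sub>R 0 + t *\<^sub>R x = y"
    using False by (simp add: t_def)
  ultimately show ?thesis
    using g0 by (simp add: t_def)
qed (use y g0 in simp)

lemma convex_on_deriv_le_secant_origin:
  fixes g :: "real \<Rightarrow> real"
  assumes cv: "convex_on {0..} g" and g0: "g 0 = 0" and m: "0 < m"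
    and d: "(g has_real_derivative g' 0) (at 0 within {0..})"
  shows "g' 0 \<le> g m / m"
proof -
  have "((\<lambda>y. (g y - g 0) / (y - 0)) \<longlongrightarrow> g' 0) (at 0 within {0..})"
    using d by (simp add: has_field_derivative_iff)
  moreover have "eventually (\<lambda>y. (g y - g 0) / (y - 0) \<le> g m / m) (at 0 within {0..})"
    unfolding eventually_at
  proof (intro exI[of _ m] conjI ballI impI)
    fix y :: real assume "y \<in> {0..}" and "y \<noteq> 0 \<and> dist y 0 < m"
    then have y: "0 < y" "y \<le> m"
      by (auto simp: dist_real_def)
    then have "g y \<le> y / m * g m"
      using convex_on_le_secant_origin[OF cv g0, of y m] by simp
    then show "(g y - g 0) / (y - 0) \<le> g m / m"
      using y g0 by (simp add: field_simps)
  qed (rule m)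
  ultimately show ?thesis
    by (rule tendsto_upperbound) (simp add: at_within_Ici_at_right)
qed

lemma convex_on_secant_origin_le_secant:
  fixes g :: "real \<Rightarrow> real"
  assumes cv: "convex_on {0..} g" and g0: "g 0 = 0" and M: "0 < M" and y: "0 < y" "y \<noteq> M"
  shows "g M / M \<le> (g y - g M) / (y - M)"
proof (cases "y < M")
  case True
  have "g y \<le> y / M * g M"
    using convex_on_le_secant_origin[OF cv g0, of y M] y True by simp
  then have "g y - g M \<le> (y - M) * (g M / M)"
    using M by (simp add: field_simps)
  then show ?thesis
    using True by (simp add: le_divide_eq mult.commute)
next
  case False
  then have yM: "M < y"
    using y by simp
  have "g M \<le> M / y * g y"
    using convex_on_le_secant_origin[OF cv g0, of M y] M yM by simp
  then have "(y - M) * (g M / M) \<le> g y - g M"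
    using M yM by (simp add: field_simps)
  then show ?thesis
    using yM by (simp add: le_divide_eq mult.commute)
qed

lemma convex_on_secant_origin_le_deriv:
  fixes g :: "real \<Rightarrow> real"
  assumes cv: "convex_on {0..} g" and g0: "g 0 = 0" and M: "0 < M"
    and d: "(g has_real_derivative g' M) (at M within {0..})"
  shows "g M / M \<le> g' M"
proof -
  have "((\<lambda>y. (g y - g M) / (y - M)) \<longlongrightarrow> g' M) (at M within {0..})"
    using d by (simp add: has_field_derivative_iff)
  moreover have "eventually (\<lambda>y. g M / M \<le> (g y - g M) / (y - M)) (at M within {0..})"
    unfolding eventually_at
    by (intro exI[of _ M] conjI ballI impI M convex_on_secant_origin_le_secant[OF cv g0])
      (auto simp: dist_real_def)
  moreover have "at M within {0..} \<noteq> bot"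
  proof
    assume "at M within {0..} = bot"
    moreover have "at_right M \<le> at M within {0..}"
      using at_le[of "{M..}" "{0..}" M] M by (simp add: at_within_Ici_at_right)
    ultimately have "at_right M = bot"
      by (metis bot_unique)
    then show False
      using trivial_limit_at_right_real[of M] unfolding trivial_limit_def by blast
  qed
  ultimately show ?thesis
    by (rule tendsto_lowerbound)
qed

lemma convex_on_secant_origin_bounds:
  fixes g g' :: "real \<Rightarrow> real"
  assumes cv: "convex_on {0..} g" and g0: "g 0 = 0" and mM: "0 < m" "m < M"
    and d0: "(g has_real_derivative g' 0) (at 0 within {0..})"
    and dM: "(g has_real_derivative g' M) (at M within {0..})"
  shows "g' 0 \<le> g m / m \<and> g M / M \<le> g' M \<and> (\<forall>x\<in>{m..M}. g m / m * x \<le> g x \<and> g x \<le> g M / M * x)"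
proof -
  have "g m / m * x \<le> g x \<and> g x \<le> g M / M * x" if "m \<le> x" "x \<le> M" for x
    using convex_on_le_secant_origin[OF cv g0, of m x] convex_on_le_secant_origin[OF cv g0, of x M]
      mM that by (simp add: field_simps)
  then show ?thesis
    using convex_on_deriv_le_secant_origin[where g' = g', OF cv g0 mM(1) d0]
      convex_on_secant_origin_le_deriv[where g' = g', OF cv g0 _ dM] mM by auto
qed

lemma concave_on_secant_origin_bounds:
  fixes g g' :: "real \<Rightarrow> real"
  assumes cc: "concave_on {0..} g" and g0: "g 0 = 0" and mM: "0 < m" "m < M"
    and d0: "(g has_real_derivative g' 0) (at 0 within {0..})"
    and dM: "(g has_real_derivative g' M) (at M within {0..})"
  shows "g m / m \<le> g' 0 \<and> g' M \<le> g M / M \<and> (\<forall>x\<in>{m..M}. g M / M * x \<le> g x \<and> g x \<le> g m / m * x)"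
proof -
  have "convex_on {0..} (\<lambda>x. - g x)"
    using cc by (simp add: concave_on_def)
  from convex_on_secant_origin_bounds[where g' = "\<lambda>x. - g' x", OF this _ mM DERIV_minus[OF d0]
      DERIV_minus[OF dM]]
  show ?thesis
    using g0 by auto
qed

context
  fixes n :: nat and sigma :: "complex mat \<Rightarrow> complex mat \<Rightarrow> complex mat"
  assumes mean: "matrix_mean n sigma"
begin

lemma convex_mat_fun_mean_bounds:
  assumes cv: "convex_on {0..} f" and f0: "f 0 = 0" and f_nonneg: "0 \<le> f m" "0 \<le> f M"
    and mM: "0 < m" "m < M"
    and d0: "(f has_real_derivative f' 0) (at 0 within {0..})"
    and dM: "(f has_real_derivative f' M) (at M within {0..})"
    and A: "psd n A" "spec_in n m M A" and B: "psd n B" "spec_in n m M B"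
  shows "loewner_le n (complex_of_real (f' 0) \<cdot>\<^sub>m sigma A B) (complex_of_real (f m / m) \<cdot>\<^sub>m sigma A B)
    \<and> loewner_le n (complex_of_real (f m / m) \<cdot>\<^sub>m sigma A B) (sigma (mat_fun n f A) (mat_fun n f B))
    \<and> loewner_le n (sigma (mat_fun n f A) (mat_fun n f B)) (complex_of_real (f M / M) \<cdot>\<^sub>m sigma A B)
    \<and> loewner_le n (complex_of_real (f M / M) \<cdot>\<^sub>m sigma A B) (complex_of_real (f' M) \<cdot>\<^sub>m sigma A B)
    \<and> loewner_le n (complex_of_real (f m / m) \<cdot>\<^sub>m sigma A B) (mat_fun n f (sigma A B))
    \<and> loewner_le n (mat_fun n f (sigma A B)) (complex_of_real (f M / M) \<cdot>\<^sub>m sigma A B)"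
proof -
  have bounds: "f' 0 \<le> f m / m" "f M / M \<le> f' M" "\<forall>x\<in>{m..M}. f m / m * x \<le> f x \<and> f x \<le> f M / M * x"
    using convex_on_secant_origin_bounds[where g' = f', OF cv f0 mM d0 dM] by auto
  have "0 \<le> f m / m" "0 \<le> f M / M"
    using f_nonneg mM by auto
  then show ?thesis
    using mat_fun_mean_between[OF mean _ _ A B _ _ bounds(3)] mM
      loewner_le_smult_left[OF mean_psd[OF mean A(1) B(1)] bounds(1)]
      loewner_le_smult_left[OF mean_psd[OF mean A(1) B(1)] bounds(2)] by auto
qed

lemma concave_mat_fun_mean_bounds:
  assumes cc: "concave_on {0..} f" and f0: "f 0 = 0" and f_nonneg: "0 \<le> f m" "0 \<le> f M"
    and mM: "0 < m" "m < M"
    and d0: "(f has_real_derivative f' 0) (at 0 within {0..})"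
    and dM: "(f has_real_derivative f' M) (at M within {0..})"
    and A: "psd n A" "spec_in n m M A" and B: "psd n B" "spec_in n m M B"
  shows "loewner_le n (complex_of_real (f m / m) \<cdot>\<^sub>m sigma A B) (complex_of_real (f' 0) \<cdot>\<^sub>m sigma A B)
    \<and> loewner_le n (sigma (mat_fun n f A) (mat_fun n f B)) (complex_of_real (f m / m) \<cdot>\<^sub>m sigma A B)
    \<and> loewner_le n (complex_of_real (f M / M) \<cdot>\<^sub>m sigma A B) (sigma (mat_fun n f A) (mat_fun n f B))
    \<and> loewner_le n (complex_of_real (f' M) \<cdot>\<^sub>m sigma A B) (complex_of_real (f M / M) \<cdot>\<^sub>m sigma A B)
    \<and> loewner_le n (mat_fun n f (sigma A B)) (complex_of_real (f m / m) \<cdot>\<^sub>m sigma A B)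
    \<and> loewner_le n (complex_of_real (f M / M) \<cdot>\<^sub>m sigma A B) (mat_fun n f (sigma A B))"
proof -
  have bounds: "f m / m \<le> f' 0" "f' M \<le> f M / M" "\<forall>x\<in>{m..M}. f M / M * x \<le> f x \<and> f x \<le> f m / m * x"
    using concave_on_secant_origin_bounds[where g' = f', OF cc f0 mM d0 dM] by auto
  have "0 \<le> f m / m" "0 \<le> f M / M"
    using f_nonneg mM by auto
  then show ?thesis
    using mat_fun_mean_between[OF mean _ _ A B _ _ bounds(3)] mM
      loewner_le_smult_left[OF mean_psd[OF mean A(1) B(1)] bounds(1)]
      loewner_le_smult_left[OF mean_psd[OF mean A(1) B(1)] bounds(2)] by auto
qed

end

theorem theorem2p1:
  fixes n :: nat and f f' :: "real \<Rightarrow> real" and m M :: real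
    and sigma :: "complex mat \<Rightarrow> complex mat \<Rightarrow> complex mat"
    and A B :: "complex mat"
  assumes f_nonneg: "\<forall>x\<ge>0. f x \<ge> 0"
    and f_deriv: "\<forall>x\<ge>0. (f has_real_derivative f' x) (at x within {0..})"
    and f0: "f 0 = 0"
    and mM: "0 < m" "m < M"
    and mean: "matrix_mean n sigma"
    and A: "pd n A" "spec_in n m M A"
    and B: "pd n B" "spec_in n m M B"
  shows
    "(convex_on {0..} f \<longrightarrow>
        loewner_le n (complex_of_real (f' 0) \<cdot>\<^sub>m sigma A B) (complex_of_real (f m / m) \<cdot>\<^sub>m sigma A B) \<and>
        loewner_le n (complex_of_real (f m / m) \<cdot>\<^sub>m sigma A B) (sigma (mat_fun n f A) (mat_fun n f B)) \<and>
        loewner_le n (sigma (mat_fun n f A) (mat_fun n f B)) (complex_of_real (f M / M) \<cdot>\<^sub>m sigma A B) \<and>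
        loewner_le n (complex_of_real (f M / M) \<cdot>\<^sub>m sigma A B) (complex_of_real (f' M) \<cdot>\<^sub>m sigma A B) \<and>
        loewner_le n (complex_of_real (f' 0) \<cdot>\<^sub>m sigma A B) (complex_of_real (f m / m) \<cdot>\<^sub>m sigma A B) \<and>
        loewner_le n (complex_of_real (f m / m) \<cdot>\<^sub>m sigma A B) (mat_fun n f (sigma A B)) \<and>
        loewner_le n (mat_fun n f (sigma A B)) (complex_of_real (f M / M) \<cdot>\<^sub>m sigma A B) \<and>
        loewner_le n (complex_of_real (f M / M) \<cdot>\<^sub>m sigma A B) (complex_of_real (f' M) \<cdot>\<^sub>m sigma A B))
   \<and> (concave_on {0..} f \<longrightarrow>
        loewner_le n (complex_of_real (f m / m) \<cdot>\<^sub>m sigma A B) (complex_of_real (f' 0) \<cdot>\<^sub>m sigma A B) \<and>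
        loewner_le n (sigma (mat_fun n f A) (mat_fun n f B)) (complex_of_real (f m / m) \<cdot>\<^sub>m sigma A B) \<and>
        loewner_le n (complex_of_real (f M / M) \<cdot>\<^sub>m sigma A B) (sigma (mat_fun n f A) (mat_fun n f B)) \<and>
        loewner_le n (complex_of_real (f' M) \<cdot>\<^sub>m sigma A B) (complex_of_real (f M / M) \<cdot>\<^sub>m sigma A B) \<and>
        loewner_le n (complex_of_real (f m / m) \<cdot>\<^sub>m sigma A B) (complex_of_real (f' 0) \<cdot>\<^sub>m sigma A B) \<and>
        loewner_le n (mat_fun n f (sigma A B)) (complex_of_real (f m / m) \<cdot>\<^sub>m sigma A B) \<and>
        loewner_le n (complex_of_real (f M / M) \<cdot>\<^sub>m sigma A B) (mat_fun n f (sigma A B)) \<and>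
        loewner_le n (complex_of_real (f' M) \<cdot>\<^sub>m sigma A B) (complex_of_real (f M / M) \<cdot>\<^sub>m sigma A B))"
proof -
  have "psd n A" "psd n B"
    using A B pd_imp_psd by auto
  moreover have "(f has_real_derivative f' 0) (at 0 within {0..})"
    "(f has_real_derivative f' M) (at M within {0..})" "0 \<le> f m" "0 \<le> f M"
    using f_deriv f_nonneg mM by auto
  ultimately show ?thesis
    using convex_mat_fun_mean_bounds[where f = f and f' = f', OF mean _ f0 _ _ mM]
      concave_mat_fun_mean_bounds[where f = f and f' = f', OF mean _ f0 _ _ mM]
      A B by blast
qed

end
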